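(* Let $m\ge2$ be an integer and let $A$ be a left brace with $A^{(3)}=A^{m+1}=\{0\}$. Let $a\in A$, and define $a_1=a$ and $a_{j+1}=a*a_j$ for $1\le j\le m-1$. Then for every $1\le k\le m-1$, \[(-a)*a_{m-k}=\sum_{j=1}^k(-1)^ja_{m-k+j}.\]
   Context: A left brace $(A,+,\cdot)$ is a set $A$ with two binary operations such that $(A,+)$ is an abelian group, $(A,\cdot)$ is a group, and $a(b+c)=ab-a+ac$ for all $a,b,c\in A$. In a left brace, $a*b=-a+ab-b$. For subsets $L,M\subseteq A$, $L*M$ is the subgroup of $(A,+)$ generated by $\{l*m\mid l\in L,m\in M\}$. Set $A^{(1)}=A$, $A^{(r+1)}=A^{(r)}*A$, and $A^1=A$, $A^{r+1}=A*A^r$ for $r\ge1$. *)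

theory Defs
  imports Main
begin

definition left_brace :: "('a::ab_group_add \<Rightarrow> 'a \<Rightarrow> 'a) \<Rightarrow> bool" where
  "left_brace mul \<longleftrightarrow>
     (\<forall>a b c. mul (mul a b) c = mul a (mul b c)) \<and>
     (\<exists>e. (\<forall>a. mul e a = a \<and> mul a e = a) \<and> (\<forall>a. \<exists>b. mul a b = e \<and> mul b a = e)) \<and>
     (\<forall>a b c. mul a (b + c) = mul a b - a + mul a c)"

definition brace_star :: "('a::ab_group_add \<Rightarrow> 'a \<Rightarrow> 'a) \<Rightarrow> 'a \<Rightarrow> 'a \<Rightarrow> 'a" where
  "brace_star mul a b = - a + mul a b - b"

definition add_subgroup :: "'a::ab_group_add set \<Rightarrow> bool" where
  "add_subgroup H \<longleftrightarrow> 0 \<in> H \<and> (\<forall>x\<in>H. \<forall>y\<in>H. x + y \<in> H) \<and> (\<forall>x\<in>H. - x \<in> H)"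

definition add_gen :: "'a::ab_group_add set \<Rightarrow> 'a set" where
  "add_gen S = \<Inter>{H. add_subgroup H \<and> S \<subseteq> H}"

definition set_star :: "('a::ab_group_add \<Rightarrow> 'a \<Rightarrow> 'a) \<Rightarrow> 'a set \<Rightarrow> 'a set \<Rightarrow> 'a set" where
  "set_star mul L M = add_gen {brace_star mul l x | l x. l \<in> L \<and> x \<in> M}"

text \<open>rseries_aux mul n = A^(n+1), lseries_aux mul n = A^(n+1).\<close>
primrec rseries_aux :: "('a::ab_group_add \<Rightarrow> 'a \<Rightarrow> 'a) \<Rightarrow> nat \<Rightarrow> 'a set" where
  "rseries_aux mul 0 = UNIV"
| "rseries_aux mul (Suc n) = set_star mul (rseries_aux mul n) UNIV"

primrec lseries_aux :: "('a::ab_group_add \<Rightarrow> 'a \<Rightarrow> 'a) \<Rightarrow> nat \<Rightarrow> 'a set" where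
  "lseries_aux mul 0 = UNIV"
| "lseries_aux mul (Suc n) = set_star mul UNIV (lseries_aux mul n)"

text \<open>right_series mul r = A^(r), left_series mul r = A^r, for r \<ge> 1.\<close>
definition right_series :: "('a::ab_group_add \<Rightarrow> 'a \<Rightarrow> 'a) \<Rightarrow> nat \<Rightarrow> 'a set" where
  "right_series mul r = rseries_aux mul (r - 1)"

definition left_series :: "('a::ab_group_add \<Rightarrow> 'a \<Rightarrow> 'a) \<Rightarrow> nat \<Rightarrow> 'a set" where
  "left_series mul r = lseries_aux mul (r - 1)"

text \<open>aseq_aux mul a n = a_(n+1): a_1 = a, a_(j+1) = a * a_j.\<close>
primrec aseq_aux :: "('a::ab_group_add \<Rightarrow> 'a \<Rightarrow> 'a) \<Rightarrow> 'a \<Rightarrow> nat \<Rightarrow> 'a" where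
  "aseq_aux mul a 0 = a"
| "aseq_aux mul a (Suc n) = brace_star mul a (aseq_aux mul a n)"

definition aseq :: "('a::ab_group_add \<Rightarrow> 'a \<Rightarrow> 'a) \<Rightarrow> 'a \<Rightarrow> nat \<Rightarrow> 'a" where
  "aseq mul a j = aseq_aux mul a (j - 1)"

end

theory Submission
  imports Defs
begin

text \<open>The map lambda_a(x) = -a + ax is an injective additive endomorphism of (A,+) with
  lambda_a(a_j) = a_j + a_{j+1}, so it telescopes the alternating sum
  c = sum_{j=0..k} (-1)^j a_{m-k+j} down to a_{m-k}, because a_m lies in A^{m+1} = 0.
  On the other hand lambda_a o lambda_{-a} = lambda_{a(-a)} and a(-a) = -(a*a) lies in A^(2),
  so A^(3) = 0 makes lambda_{a(-a)} the identity. Injectivity of lambda_a then gives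
  lambda_{-a}(a_{m-k}) = c, that is (-a)*a_{m-k} = c - a_{m-k}.\<close>

definition brace_lambda :: "('a::ab_group_add \<Rightarrow> 'a \<Rightarrow> 'a) \<Rightarrow> 'a \<Rightarrow> 'a \<Rightarrow> 'a" where
  "brace_lambda mul x y = - x + mul x y"

definition alt_sign :: "nat \<Rightarrow> 'a::ab_group_add \<Rightarrow> 'a" where
  "alt_sign j x = (if even j then x else - x)"

lemma alt_sign_Suc: "alt_sign (Suc j) x = - alt_sign j x"
  by (simp add: alt_sign_def)

lemma brace_star_eq_lambda_diff: "brace_star mul x y = brace_lambda mul x y - y"
  by (simp add: brace_star_def brace_lambda_def)

lemma brace_lambda_add:
  assumes "left_brace mul"
  shows "brace_lambda mul x (y + z) = brace_lambda mul x y + brace_lambda mul x z"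
  using assms unfolding left_brace_def brace_lambda_def by (simp add: algebra_simps)

lemma brace_lambda_minus:
  assumes "left_brace mul"
  shows "brace_lambda mul x (- y) = - brace_lambda mul x y"
proof -
  have zero: "brace_lambda mul x 0 = 0"
    using brace_lambda_add[OF assms, of x 0 0] by simp
  show ?thesis
    using brace_lambda_add[OF assms, of x y "- y"] by (simp add: zero eq_neg_iff_add_eq_0 add.commute)
qed

lemma brace_lambda_inj:
  assumes "left_brace mul" and "brace_lambda mul x y = brace_lambda mul x z"
  shows "y = z"
proof -
  from assms(1) obtain e where unit: "\<forall>a. mul e a = a \<and> mul a e = a"
    and inv: "\<forall>a. \<exists>b. mul a b = e \<and> mul b a = e"
    and assoc: "\<forall>a b c. mul (mul a b) c = mul a (mul b c)"
    unfolding left_brace_def by blast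
  obtain x' where "mul x' x = e" using inv by blast
  moreover have "mul x y = mul x z" using assms(2) by (simp add: brace_lambda_def)
  ultimately show ?thesis using assoc unit by metis
qed

lemma brace_lambda_mul:
  assumes "left_brace mul"
  shows "brace_lambda mul (mul x y) z = brace_lambda mul x (brace_lambda mul y z)"
proof -
  have "brace_lambda mul x (brace_lambda mul y z) = - brace_lambda mul x y + brace_lambda mul x (mul y z)"
    using brace_lambda_add[OF assms, of x "- y" "mul y z"]
    by (simp add: brace_lambda_def[of mul y z] brace_lambda_minus[OF assms])
  also have "\<dots> = brace_lambda mul (mul x y) z"
    using assms unfolding left_brace_def brace_lambda_def by (simp add: algebra_simps)
  finally show ?thesis by simp
qed

lemma mul_minus_self:
  assumes "left_brace mul"
  shows "mul x (- x) = - brace_star mul x x"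
  using brace_lambda_minus[OF assms, of x x]
  by (simp add: brace_lambda_def brace_star_def algebra_simps)

lemma additive_alt_sign_telescope:
  fixes f :: "'a::ab_group_add \<Rightarrow> 'a"
  assumes add: "\<And>u v. f (u + v) = f u + f v"
    and step: "\<And>j. f (x j) = x j + x (Suc j)"
  shows "f (\<Sum>j=0..k. alt_sign j (x j)) = x 0 + alt_sign k (x (Suc k))"
proof (induction k)
  case 0
  show ?case by (simp add: alt_sign_def step)
next
  case (Suc k)
  have minus: "f (- u) = - f u" for u
    using add[of u "- u"] add[of 0 0] by (simp add: eq_neg_iff_add_eq_0 add.commute)
  have "f (alt_sign (Suc k) (x (Suc k))) = alt_sign (Suc k) (x (Suc k)) + alt_sign (Suc k) (x (Suc (Suc k)))"
    by (simp add: alt_sign_def minus step)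
  then show ?case
    unfolding sum.atLeast0_atMost_Suc add Suc by (simp add: alt_sign_Suc)
qed

lemma brace_star_mem_set_star:
  "l \<in> L \<Longrightarrow> x \<in> M \<Longrightarrow> brace_star mul l x \<in> set_star mul L M"
  unfolding set_star_def add_gen_def by blast

lemma add_gen_uminus: "x \<in> add_gen S \<Longrightarrow> - x \<in> add_gen S"
  unfolding add_gen_def add_subgroup_def by blast

lemma aseq_aux_mem_lseries_aux: "aseq_aux mul a n \<in> lseries_aux mul n"
  by (induction n) (simp_all add: brace_star_mem_set_star)

lemma brace_star_minus_square_eq_0:
  assumes "right_series mul 3 = {0}"
  shows "brace_star mul (- brace_star mul a a) y = 0"
proof -
  have "- brace_star mul a a \<in> set_star mul UNIV UNIV"
    unfolding set_star_def by (rule add_gen_uminus) (rule brace_star_mem_set_star[unfolded set_star_def], simp_all)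
  then have "brace_star mul (- brace_star mul a a) y \<in> right_series mul 3"
    by (simp add: right_series_def numeral_3_eq_3 brace_star_mem_set_star)
  with assms show ?thesis by simp
qed

lemma brace_lambda_inverse_of_minus:
  assumes "left_brace mul" and "right_series mul 3 = {0}"
  shows "brace_lambda mul a (brace_lambda mul (- a) y) = y"
  using brace_lambda_mul[OF assms(1), of a "- a" y] brace_star_minus_square_eq_0[OF assms(2), of a y]
  by (simp add: mul_minus_self[OF assms(1)] brace_star_eq_lambda_diff)

theorem mainTheorem10:
  fixes mul :: "'a::ab_group_add \<Rightarrow> 'a \<Rightarrow> 'a" and m k :: nat and a :: 'a
  assumes "m \<ge> 2"
    and "left_brace mul"
    and "right_series mul 3 = {0}"
    and "left_series mul (m + 1) = {0}"
    and "1 \<le> k" and "k \<le> m - 1"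
  shows "brace_star mul (- a) (aseq mul a (m - k)) =
         (\<Sum>j = 1..k. (if even j then aseq mul a (m - k + j) else - aseq mul a (m - k + j)))"
proof -
  define t where "t = m - k - 1"
  define x where "x j = aseq_aux mul a (t + j)" for j
  define c where "c = (\<Sum>j=0..k. alt_sign j (x j))"
  have aseq_x: "aseq mul a (m - k + j) = x j" for j
    using assms(1,5,6) by (simp add: aseq_def x_def t_def)
  have "x (Suc k) = 0"
    using aseq_aux_mem_lseries_aux[of mul a m] assms(4-6) by (simp add: x_def t_def left_series_def)
  then have "brace_lambda mul a c = x 0"
    unfolding c_def using assms(2)
    by (subst additive_alt_sign_telescope) (simp_all add: x_def brace_lambda_add brace_star_eq_lambda_diff alt_sign_def)
  also have "\<dots> = brace_lambda mul a (brace_lambda mul (- a) (x 0))"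
    using brace_lambda_inverse_of_minus[OF assms(2,3)] by simp
  finally have "brace_lambda mul (- a) (x 0) = c"
    using brace_lambda_inj[OF assms(2)] by metis
  then have "brace_star mul (- a) (x 0) = (\<Sum>j=1..k. alt_sign j (x j))"
    by (simp add: brace_star_eq_lambda_diff c_def sum.atLeast_Suc_atMost alt_sign_def)
  also have "\<dots> = (\<Sum>j = 1..k. (if even j then aseq mul a (m - k + j) else - aseq mul a (m - k + j)))"
    by (rule sum.cong) (simp_all only: aseq_x alt_sign_def)
  finally show ?thesis
    using aseq_x[of 0] by simp
qed

end
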